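(* Assume (A), $c_1\ge c_1^F$, that $v$ is differentiable on $[0,\infty)$ (one-sided at $0$) with $v'(0)=0$, and let $t^*:=t^F_{c_2}$. Define the input-rate path (the derivative on $(-t^*,0)$ of the most probable path $f^*(r)=-\frac{\Gamma(-r,t^* )}{v(t^* )}(b+c_2t^* )$) $$g^*(r):=\frac{b+c_2t^*}{2v(t^* )}\big(v'(r+t^* )+v'(-r)\big),\qquad r\in[-t^*,0].$$ Then $g^*(0)=g^*(-t^* )=c_2$.
   Context: $v:[0,\infty)\to[0,\infty)$ is continuous, $v(0)=0$, $\lim_{t\to\infty}v(t)/t^\alpha=0$ for some $\alpha<2$, the variance function of a centered Gaussian process with stationary increments; $\Gamma(s,t):=\tfrac12(v(|s|)+v(|t|)-v(|t-s|))$. Fix $b>0$, $c_1>c_2>0$. $L_c(t):=(b+ct)^2/(2v(t))$; $t^F_{c_2}$ is a minimizer of $L_{c_2}$ over $t>0$; $k(s,t):=\frac{\Gamma(s,t)}{v(t)}(b+c_2t)$; $c_1^F:=\sup_{s\in(0,t^F_{c_2})}k(s,t^F_{c_2})/s$. Assumption (A): $\sqrt v\in C^2([0,\infty))$, strictly increasing and strictly concave. *)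

theory Defs
  imports "HOL-Analysis.Analysis"
begin

text \<open>Covariance function of a centered Gaussian process with stationary increments
  and variance function v: Gamma(s,t) = (v|s| + v|t| - v|t-s|)/2.\<close>
definition Gamma :: "(real \<Rightarrow> real) \<Rightarrow> real \<Rightarrow> real \<Rightarrow> real" where
  "Gamma v s t = (v \<bar>s\<bar> + v \<bar>t\<bar> - v \<bar>t - s\<bar>) / 2"

text \<open>v is the variance function of a centered Gaussian process with stationary
  increments (and X(0)=0): equivalently, the induced covariance Gamma is a positive
  semidefinite kernel (Kolmogorov extension), and v is continuous with v 0 = 0.\<close>
definition is_variance_function :: "(real \<Rightarrow> real) \<Rightarrow> bool" where
  "is_variance_function v \<longleftrightarrow>
     (\<forall>(n::nat) (x::nat \<Rightarrow> real) (a::nat \<Rightarrow> real).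
        0 \<le> (\<Sum>i<n. \<Sum>j<n. a i * a j * Gamma v (x i) (x j)))"

definition L :: "(real \<Rightarrow> real) \<Rightarrow> real \<Rightarrow> real \<Rightarrow> real \<Rightarrow> real" where
  "L v b c t = (b + c * t)\<^sup>2 / (2 * v t)"

definition kfun :: "(real \<Rightarrow> real) \<Rightarrow> real \<Rightarrow> real \<Rightarrow> real \<Rightarrow> real \<Rightarrow> real" where
  "kfun v b c2 s t = Gamma v s t / v t * (b + c2 * t)"

definition c1F :: "(real \<Rightarrow> real) \<Rightarrow> real \<Rightarrow> real \<Rightarrow> real \<Rightarrow> ereal" where
  "c1F v b c2 t = (SUP s\<in>{0<..<t}. ereal (kfun v b c2 s t / s))"

definition strictly_concave_on :: "real set \<Rightarrow> (real \<Rightarrow> real) \<Rightarrow> bool" where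
  "strictly_concave_on S f \<longleftrightarrow>
     (\<forall>x\<in>S. \<forall>y\<in>S. \<forall>u::real. x \<noteq> y \<and> 0 < u \<and> u < 1 \<longrightarrow>
        u * f x + (1 - u) * f y < f (u * x + (1 - u) * y))"

definition assumption_A :: "(real \<Rightarrow> real) \<Rightarrow> bool" where
  "assumption_A v \<longleftrightarrow>
     (\<exists>d1 d2. (\<forall>t\<ge>0. ((\<lambda>x. sqrt (v x)) has_real_derivative d1 t) (at t within {0..})
                    \<and> (d1 has_real_derivative d2 t) (at t within {0..}))
            \<and> continuous_on {0..} d2)
     \<and> strict_mono_on {0..} (\<lambda>x. sqrt (v x))
     \<and> strictly_concave_on {0..} (\<lambda>x. sqrt (v x))"

definition gstar :: "(real \<Rightarrow> real) \<Rightarrow> (real \<Rightarrow> real) \<Rightarrow> real \<Rightarrow> real \<Rightarrow> real \<Rightarrow> real \<Rightarrow> real" where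
  "gstar v v' b c2 t r = (b + c2 * t) / (2 * v t) * (v' (r + t) + v' (- r))"

end

theory Submission
  imports Defs
begin

text \<open>Since \<open>t\<^sup>*\<close> is an interior minimiser of \<open>L\<^sub>c\<^sub>2\<close>, the derivative of \<open>L\<^sub>c\<^sub>2\<close> vanishes there,
  which is the first-order condition \<open>(b + c\<^sub>2 t\<^sup>*) v'(t\<^sup>*) = 2 c\<^sub>2 v(t\<^sup>*)\<close>. Because \<open>v'(0) = 0\<close>,
  both \<open>g\<^sup>*(0)\<close> and \<open>g\<^sup>*(-t\<^sup>*)\<close> equal \<open>(b + c\<^sub>2 t\<^sup>*) v'(t\<^sup>*) / (2 v(t\<^sup>*))\<close>, which is therefore \<open>c\<^sub>2\<close>.\<close>

lemma assumption_A_imp_pos: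
  assumes "assumption_A v" and "v 0 = 0" and "t > 0"
  shows "v t > 0"
proof -
  have "strict_mono_on {0..} (\<lambda>x. sqrt (v x))"
    using assms(1) unfolding assumption_A_def by blast
  then have "sqrt (v 0) < sqrt (v t)"
    using \<open>t > 0\<close> by (auto simp: strict_mono_on_def)
  then show ?thesis
    using \<open>v 0 = 0\<close> by simp
qed

lemma has_real_derivative_at_within_nonneg_imp_at:
  assumes "(f has_real_derivative D) (at t within {0..})" and "t > 0"
  shows "(f has_real_derivative D) (at t)"
proof -
  have "at t within {0..} = at t within {0<..}"
    using \<open>t > 0\<close> by (intro at_within_nhd[of _ "{0<..}"]) auto
  then show ?thesis
    using assms at_within_open[of t "{0<..}"] has_field_derivative_at_within by auto
qed

lemma L_has_real_derivative:
  assumes "(v has_real_derivative D) (at t)" and "v t \<noteq> 0"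
  shows "(L v b c has_real_derivative
            (b + c * t) * (2 * c * v t - (b + c * t) * D) / (2 * (v t)\<^sup>2)) (at t)"
proof -
  have "((\<lambda>t. (b + c * t)\<^sup>2 / (2 * v t)) has_real_derivative
          (2 * (b + c * t) * c * (2 * v t) - (b + c * t)\<^sup>2 * (2 * D)) / (2 * v t * (2 * v t)))
          (at t)"
    using assms by (auto intro!: derivative_eq_intros)
  moreover have "(2 * (b + c * t) * c * (2 * v t) - (b + c * t)\<^sup>2 * (2 * D)) / (2 * v t * (2 * v t))
      = (b + c * t) * (2 * c * v t - (b + c * t) * D) / (2 * (v t)\<^sup>2)"
    using \<open>v t \<noteq> 0\<close> by (simp add: field_simps power2_eq_square)
  ultimately show ?thesis
    by (simp add: L_def[abs_def])
qed

lemma L_minimiser_first_order: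
  assumes min: "\<forall>s>0. L v b c t \<le> L v b c s" and "t > 0"
    and deriv: "(v has_real_derivative D) (at t)" and "v t > 0" and "b + c * t \<noteq> 0"
  shows "(b + c * t) * D = 2 * c * v t"
proof -
  have "(b + c * t) * (2 * c * v t - (b + c * t) * D) / (2 * (v t)\<^sup>2) = 0"
    using min \<open>t > 0\<close> \<open>v t > 0\<close>
    by (intro DERIV_local_min[OF L_has_real_derivative[OF deriv], of t]) auto
  then show ?thesis
    using \<open>v t > 0\<close> \<open>b + c * t \<noteq> 0\<close> by simp
qed

lemma gstar_endpoints:
  assumes "v' 0 = 0"
  shows "gstar v v' b c t 0 = (b + c * t) * v' t / (2 * v t)"
    and "gstar v v' b c t (- t) = (b + c * t) * v' t / (2 * v t)"
  using assms by (simp_all add: gstar_def)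

theorem proposition3p13:
  fixes v v' :: "real \<Rightarrow> real" and b c1 c2 tstar :: real
  assumes v_nonneg: "\<forall>t\<ge>0. 0 \<le> v t"
    and v_cont: "continuous_on {0..} v"
    and v0: "v 0 = 0"
    and v_growth: "\<exists>\<alpha><2. ((\<lambda>t. v t / t powr \<alpha>) \<longlongrightarrow> 0) at_top"
    and v_var: "is_variance_function v"
    and b_pos: "b > 0" and c2_pos: "c2 > 0" and c12: "c1 > c2"
    and tstar_pos: "tstar > 0"
    and tstar_min: "\<forall>t>0. L v b c2 tstar \<le> L v b c2 t"
    and A: "assumption_A v"
    and c1_ge: "ereal c1 \<ge> c1F v b c2 tstar"
    and v_deriv: "\<forall>t\<ge>0. (v has_real_derivative v' t) (at t within {0..})"
    and v'0: "v' 0 = 0"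
  shows "gstar v v' b c2 tstar 0 = c2 \<and> gstar v v' b c2 tstar (- tstar) = c2"
proof -
  have v_pos: "v tstar > 0"
    using A v0 tstar_pos by (rule assumption_A_imp_pos)
  have "(v has_real_derivative v' tstar) (at tstar)"
    using v_deriv tstar_pos by (intro has_real_derivative_at_within_nonneg_imp_at) auto
  moreover have "b + c2 * tstar > 0"
    using b_pos c2_pos tstar_pos by (simp add: add_pos_pos)
  ultimately have "(b + c2 * tstar) * v' tstar = 2 * c2 * v tstar"
    using tstar_min tstar_pos v_pos by (intro L_minimiser_first_order) auto
  then show ?thesis
    using v_pos by (simp add: gstar_endpoints[where v' = v', OF v'0])
qed

end
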